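(* Under the setup described in the context, with $\bar c:=n+\min\{k,n-k\}-s+2gn/s$, $$\mathrm{P}\big[c\le\bar c\ \text{and}\ \hat n<4gn/s\big]\ge 1-4e^{-2g^2/s}.$$
   Context: Sampling setup. Let $X=(x_1,\dots,x_n)$ be a list of $n\ge 2$ elements of a totally ordered set; repeated values are allowed. Let $k$ be an integer with $1\le k\le n$, let $s$ be an integer with $1\le s\le n-1$, and let $g>0$ be real. A set $I\subset\{1,\dots,n\}$ of $s$ positions is chosen uniformly at random among all $s$-element subsets. The sample $(x_j)_{j\in I}$ has sorted elements $y_1^*\le\dots\le y_s^*$. Define $i_u:=\max\{\lceil ks/n-g\rceil,1\}$, $i_v:=\min\{\lceil ks/n+g\rceil,s\}$, $u:=y_{i_u}^*$ and $v:=y_{i_v}^*$. Comparison count $c$: - $c=n-s$ if $u=v$; - $c=(n-s)+|\{j\notin I: x_j<v\}|$ if $u<v$ and $k<n/2$; - $c=(n-s)+|\{j\notin I: x_j>u\}|$ if $u<v$ and $k\ge n/2$. This is the number of comparisons when each non-sampled element is compared to $v$ first (to $u$ first if $k\ge n/2$), and to the other pivot only when necessary. Residual size $\hat n$. Let $L=\{j:x_j<u\}$, $U=\{j:x_j=u\}$, $M=\{j:u<x_j<v\}$ and $R=\{j:x_j>v\}$. Apply the first applicable rule: 1. If $|L|<k\le|L\cup U|$ or $|L\cup U\cup M|<k\le n-|R|$, then $\hat n:=0$. 2. Otherwise, if $k\le|L|$, then $\hat n:=|L|$. 3. Otherwise, if $n-|R|<k$, then $\hat n:=|R|$. 4. Otherwise,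 $\hat n:=|M|$. $\mathrm{P}$ is probability with respect to the random choice of $I$. *)

theory Defs
  imports "HOL-Probability.Probability"
begin

text \<open>The list X = xs has positions 0..<n (0-indexed; the paper uses 1..n).
  A sample is a set I of positions.\<close>

definition sample_sorted :: "'a::linorder list \<Rightarrow> nat set \<Rightarrow> 'a list" where
  "sample_sorted xs I = sort (map (\<lambda>j. xs ! j) (sorted_list_of_set I))"

definition ystar :: "'a::linorder list \<Rightarrow> nat set \<Rightarrow> nat \<Rightarrow> 'a" where
  "ystar xs I i = sample_sorted xs I ! (i - 1)"

definition idx_u :: "nat \<Rightarrow> nat \<Rightarrow> nat \<Rightarrow> real \<Rightarrow> nat" where
  "idx_u n k s g = nat (max (\<lceil>real k * real s / real n - g\<rceil>) 1)"

definition idx_v :: "nat \<Rightarrow> nat \<Rightarrow> nat \<Rightarrow> real \<Rightarrow> nat" where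
  "idx_v n k s g = nat (min (\<lceil>real k * real s / real n + g\<rceil>) (int s))"

definition pivot_u :: "'a::linorder list \<Rightarrow> nat \<Rightarrow> nat \<Rightarrow> real \<Rightarrow> nat set \<Rightarrow> 'a" where
  "pivot_u xs k s g I = ystar xs I (idx_u (length xs) k s g)"

definition pivot_v :: "'a::linorder list \<Rightarrow> nat \<Rightarrow> nat \<Rightarrow> real \<Rightarrow> nat set \<Rightarrow> 'a" where
  "pivot_v xs k s g I = ystar xs I (idx_v (length xs) k s g)"

definition comparisons :: "'a::linorder list \<Rightarrow> nat \<Rightarrow> nat \<Rightarrow> real \<Rightarrow> nat set \<Rightarrow> nat" where
  "comparisons xs k s g I =
    (let n = length xs; u = pivot_u xs k s g I; v = pivot_v xs k s g I in
     if u = v then n - s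
     else if real k < real n / 2 then (n - s) + card {j\<in>{..<n}. j \<notin> I \<and> xs ! j < v}
     else (n - s) + card {j\<in>{..<n}. j \<notin> I \<and> xs ! j > u})"

definition residual_size :: "'a::linorder list \<Rightarrow> nat \<Rightarrow> nat \<Rightarrow> real \<Rightarrow> nat set \<Rightarrow> nat" where
  "residual_size xs k s g I =
    (let n = length xs; u = pivot_u xs k s g I; v = pivot_v xs k s g I;
         L = {j\<in>{..<n}. xs ! j < u}; U = {j\<in>{..<n}. xs ! j = u};
         M = {j\<in>{..<n}. u < xs ! j \<and> xs ! j < v}; R = {j\<in>{..<n}. xs ! j > v} in
     if (card L < k \<and> k \<le> card (L \<union> U)) \<or> (card (L \<union> U \<union> M) < k \<and> k \<le> n - card R) then 0
     else if k \<le> card L then card L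
     else if n - card R < k then card R
     else card M)"

definition sample_dist :: "nat \<Rightarrow> nat \<Rightarrow> nat set pmf" where
  "sample_dist n s = pmf_of_set {I. I \<subseteq> {..<n} \<and> card I = s}"

end

theory Submission
  imports Defs
begin

text \<open>
  Write \<open>N = n / s\<close> and call the position of an element in \<open>sort X\<close> its rank.
  If the ranks of the pivots \<open>u = y\<^sup>*\<^sub>i\<^sub>u\<close> and \<open>v = y\<^sup>*\<^sub>i\<^sub>v\<close> lie within about \<open>g N\<close> of
  their expected values \<open>i\<^sub>u N\<close> and \<open>i\<^sub>v N\<close>, then the sizes of \<open>L\<close>, \<open>M\<close>, \<open>R\<close> and the
  number of non-sampled elements below \<open>v\<close> (or above \<open>u\<close>) are bounded deterministically,
  because \<open>i\<^sub>v - i\<^sub>u < 2 g + 1\<close> and \<open>i\<^sub>u, i\<^sub>v\<close> straddle \<open>k s / n\<close>.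
  The rank of \<open>y\<^sup>*\<^sub>i\<close> is below \<open>t\<close> iff at least \<open>i\<close> sampled positions hold one of the
  \<open>t\<close> smallest elements, a hypergeometric event; Hoeffding's inequality for sampling
  without replacement bounds each of the four deviations by \<open>exp (-2 g\<^sup>2 / s)\<close>.
\<close>

section \<open>Tail bounds for the hypergeometric distribution\<close>

lemma card_supersets_of_card:
  assumes "finite U" "J \<subseteq> U" "card J \<le> s"
  shows "card {I. I \<subseteq> U \<and> card I = s \<and> J \<subseteq> I} = (card U - card J) choose (s - card J)"
proof -
  have fJ: "finite J" using assms finite_subset by blast
  have "{I. I \<subseteq> U \<and> card I = s \<and> J \<subseteq> I}
        = (\<lambda>K. K \<union> J) ` {K. K \<subseteq> U - J \<and> card K = s - card J}"
  proof (intro equalityI subsetI)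
    fix I assume I: "I \<in> {I. I \<subseteq> U \<and> card I = s \<and> J \<subseteq> I}"
    then have "I - J \<in> {K. K \<subseteq> U - J \<and> card K = s - card J}"
      using fJ by (auto simp: card_Diff_subset)
    moreover have "I = (I - J) \<union> J" using I by auto
    ultimately show "I \<in> (\<lambda>K. K \<union> J) ` {K. K \<subseteq> U - J \<and> card K = s - card J}" by blast
  next
    fix I assume "I \<in> (\<lambda>K. K \<union> J) ` {K. K \<subseteq> U - J \<and> card K = s - card J}"
    then obtain K where K: "K \<subseteq> U - J" "card K = s - card J" "I = K \<union> J" by blast
    have "finite K" using K(1) assms(1) finite_subset by blast
    then have "card (K \<union> J) = card K + card J" using fJ K(1) by (intro card_Un_disjoint) auto
    then have "card I = s" using K(2,3) assms(3) by simp
    then show "I \<in> {I. I \<subseteq> U \<and> card I = s \<and> J \<subseteq> I}" using K assms(2) by auto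
  qed
  also have "card \<dots> = card {K. K \<subseteq> U - J \<and> card K = s - card J}"
    by (rule card_image) (auto intro!: inj_onI)
  also have "\<dots> = card (U - J) choose (s - card J)"
    using assms(1) by (intro n_subsets) simp
  finally show ?thesis using assms fJ by (simp add: card_Diff_subset)
qed

lemma sum_Pow_card:
  fixes f :: "nat \<Rightarrow> 'b::comm_semiring_1"
  assumes "finite A"
  shows "(\<Sum>J\<in>Pow A. f (card J)) = (\<Sum>j\<le>card A. of_nat (card A choose j) * f j)"
proof -
  have "(\<Sum>J\<in>Pow A. f (card J)) = (\<Sum>j\<le>card A. \<Sum>J | J \<in> Pow A \<and> card J = j. f (card J))"
    by (rule sum.group[symmetric]) (use assms in \<open>auto intro: card_mono\<close>)
  also have "\<dots> = (\<Sum>j\<le>card A. of_nat (card A choose j) * f j)"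
    using n_subsets[OF assms] by (intro sum.cong) simp_all
  finally show ?thesis .
qed

lemma power_one_plus_card:
  fixes a :: "'b::comm_semiring_1"
  assumes "finite A"
  shows "(1 + a) ^ card A = (\<Sum>J\<in>Pow A. a ^ card J)"
  using binomial_ring[of a 1 "card A"] sum_Pow_card[OF assms, of "\<lambda>j. a ^ j"]
  by (simp add: add.commute mult.commute)

lemma binomial_mult_power_le:
  assumes "t \<le> n"
  shows "real (t choose j) * real n ^ j \<le> real (n choose j) * real t ^ j"
proof (cases "j \<le> t")
  case False
  then show ?thesis by (simp add: binomial_eq_0)
next
  case True
  have fact_mult: "fact j * (real (m choose j) * real c ^ j) = (\<Prod>i = 0..<j. (real m - i) * real c)"
    for m c :: nat
    by (simp add: binomial_gbinomial gbinomial_mult_fact prod.distrib mult.assoc)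
  have "(\<Prod>i = 0..<j. (real t - i) * real n) \<le> (\<Prod>i = 0..<j. (real n - i) * real t)"
  proof (rule prod_mono)
    fix i assume "i \<in> {0..<j}"
    then have "0 \<le> (real t - i) * real n" using True by simp
    moreover have "real i * real t \<le> real i * real n" using assms by (simp add: mult_left_mono)
    then have "(real t - i) * real n \<le> (real n - i) * real t" by (simp add: algebra_simps)
    ultimately show "0 \<le> (real t - i) * real n \<and> (real t - i) * real n \<le> (real n - i) * real t"
      by blast
  qed
  then have "fact j * (real (t choose j) * real n ^ j) \<le> fact j * (real (n choose j) * real t ^ j)"
    by (simp only: fact_mult)
  then show ?thesis by simp
qed

lemma hypergeometric_term_le:
  assumes "t \<le> n" "j \<le> s" "s \<le> n"
  shows "real (t choose j) * real ((n - j) choose (s - j))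
         \<le> real (n choose s) * real (s choose j) * (real t / real n) ^ j"
proof (cases "n = 0")
  case True
  then show ?thesis using assms by simp
next
  case False
  have ratio: "real (t choose j) \<le> real (n choose j) * (real t / real n) ^ j"
    using binomial_mult_power_le[OF assms(1), of j] False by (simp add: power_divide field_simps)
  have "real (t choose j) * real ((n - j) choose (s - j))
             \<le> real (n choose j) * real ((n - j) choose (s - j)) * (real t / real n) ^ j"
    using mult_right_mono[OF ratio, of "real ((n - j) choose (s - j))"] by (simp add: mult_ac)
  also have "real (n choose j) * real ((n - j) choose (s - j))
             = real (n choose s) * real (s choose j)"
    using choose_mult[OF assms(2,3)] by (metis of_nat_mult)
  finally show ?thesis .
qed

lemma sum_power_card_Int_eq:
  fixes a :: "'b::comm_semiring_1"
  assumes U: "finite U" and A: "A \<subseteq> U"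
  shows "(\<Sum>I | I \<subseteq> U \<and> card I = s. (1 + a) ^ card (I \<inter> A))
         = (\<Sum>j\<le>card A. of_nat (card A choose j) * a ^ j
              * of_nat (if j \<le> s then (card U - j) choose (s - j) else 0))"
proof -
  define S where "S = {I. I \<subseteq> U \<and> card I = s}"
  define N where "N = (\<lambda>j. if j \<le> s then (card U - j) choose (s - j) else 0)"
  have fA: "finite A" using A U finite_subset by blast
  have fS: "finite S" unfolding S_def using U by (auto intro: finite_subset[of _ "Pow U"])
  have supersets: "card {I. I \<in> S \<and> J \<subseteq> I} = N (card J)" if "J \<subseteq> A" for J
  proof (cases "card J \<le> s")
    case True
    have "J \<subseteq> U" using that A by blast
    moreover have "{I. I \<in> S \<and> J \<subseteq> I} = {I. I \<subseteq> U \<and> card I = s \<and> J \<subseteq> I}"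
      unfolding S_def by auto
    ultimately show ?thesis
      using card_supersets_of_card[OF U _ True] True unfolding N_def by simp
  next
    case False
    have "card I \<ge> card J" if "I \<subseteq> U" "J \<subseteq> I" for I
      using that U by (meson card_mono finite_subset)
    then have "{I. I \<in> S \<and> J \<subseteq> I} = {}" using False unfolding S_def by fastforce
    then show ?thesis using False unfolding N_def by (metis card.empty)
  qed
  have "(\<Sum>I\<in>S. (1 + a) ^ card (I \<inter> A)) = (\<Sum>I\<in>S. \<Sum>J | J \<in> Pow A \<and> J \<subseteq> I. a ^ card J)"
  proof (rule sum.cong[OF refl])
    fix I
    have "Pow (I \<inter> A) = {J. J \<in> Pow A \<and> J \<subseteq> I}" by auto
    then show "(1 + a) ^ card (I \<inter> A) = (\<Sum>J | J \<in> Pow A \<and> J \<subseteq> I. a ^ card J)"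
      using power_one_plus_card[of "I \<inter> A" a] fA by simp
  qed
  also have "\<dots> = (\<Sum>J\<in>Pow A. \<Sum>I | I \<in> S \<and> J \<subseteq> I. a ^ card J)"
    using fS fA by (intro sum.swap_restrict) auto
  also have "\<dots> = (\<Sum>J\<in>Pow A. a ^ card J * of_nat (N (card J)))"
    using supersets by (intro sum.cong) (auto simp: mult.commute)
  also have "\<dots> = (\<Sum>j\<le>card A. of_nat (card A choose j) * (a ^ j * of_nat (N j)))"
    by (rule sum_Pow_card[OF fA])
  finally show ?thesis unfolding S_def N_def by (simp add: mult.assoc)
qed

text \<open>
  Hoeffding's comparison with sampling with replacement: the generating function of the
  hypergeometric count \<open>card (I \<inter> A)\<close> is at most that of the binomial distribution with
  parameters \<open>s\<close> and \<open>card A / card U\<close>.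
\<close>

lemma sum_power_card_Int_le:
  fixes a :: real
  assumes U: "finite U" and A: "A \<subseteq> U" and s: "s \<le> card U" and a: "0 \<le> a"
  shows "(\<Sum>I | I \<subseteq> U \<and> card I = s. (1 + a) ^ card (I \<inter> A))
         \<le> real (card U choose s) * (1 + a * real (card A) / real (card U)) ^ s"
proof -
  define n where "n = card U"
  define t where "t = card A"
  have tn: "t \<le> n" unfolding t_def n_def using A U by (simp add: card_mono)
  have "(\<Sum>I | I \<subseteq> U \<and> card I = s. (1 + a) ^ card (I \<inter> A))
        = (\<Sum>j\<le>t. real (t choose j) * a ^ j * real (if j \<le> s then (n - j) choose (s - j) else 0))"
    unfolding n_def t_def by (rule sum_power_card_Int_eq[OF U A])
  also have "\<dots> \<le> (\<Sum>j\<le>t. real (n choose s) * real (s choose j) * (a * real t / real n) ^ j)"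
  proof (rule sum_mono)
    fix j
    show "real (t choose j) * a ^ j * real (if j \<le> s then (n - j) choose (s - j) else 0)
          \<le> real (n choose s) * real (s choose j) * (a * real t / real n) ^ j"
    proof (cases "j \<le> s")
      case True
      have "real (t choose j) * real ((n - j) choose (s - j)) * a ^ j
            \<le> real (n choose s) * real (s choose j) * (real t / real n) ^ j * a ^ j"
        using hypergeometric_term_le[OF tn True] s a unfolding n_def
        by (intro mult_right_mono) simp_all
      then show ?thesis using True by (simp add: power_mult_distrib power_divide mult_ac)
    qed (simp add: binomial_eq_0)
  qed
  also have "\<dots> \<le> (\<Sum>j\<le>n. real (n choose s) * real (s choose j) * (a * real t / real n) ^ j)"
    using tn a by (intro sum_mono2) auto
  also have "\<dots> = (\<Sum>j\<le>s. real (n choose s) * real (s choose j) * (a * real t / real n) ^ j)"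
    using s by (intro sum.mono_neutral_right) (auto simp: n_def binomial_eq_0)
  also have "\<dots> = real (n choose s) * (a * real t / real n + 1) ^ s"
    by (simp add: binomial_ring sum_distrib_left mult_ac)
  finally show ?thesis unfolding n_def t_def by (simp add: add.commute)
qed

lemma Hoeffdings_lemma_exp:
  fixes l p :: real
  assumes "0 \<le> l" "0 \<le> p"
  shows "1 + p * (exp l - 1) \<le> exp (l * p + l\<^sup>2 / 8)"
proof -
  have pos: "0 < 1 + p * (exp l - 1)" using assms by (simp add: add_pos_nonneg)
  have "ln (1 + p * (exp l - 1)) \<le> l * p + l\<^sup>2 / 8"
    using Hoeffdings_lemma_aux[OF assms] by simp
  then show ?thesis using pos by (metis exp_le_cancel_iff exp_ln)
qed

lemma subsets_of_card_finite_nonempty: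
  assumes "finite U" "s \<le> card U"
  shows "finite {I. I \<subseteq> U \<and> card I = s}" "{I. I \<subseteq> U \<and> card I = s} \<noteq> {}"
proof -
  show fin: "finite {I. I \<subseteq> U \<and> card I = s}"
    using assms(1) by (auto intro: finite_subset[of _ "Pow U"])
  have "card {I. I \<subseteq> U \<and> card I = s} = card U choose s" by (rule n_subsets[OF assms(1)])
  then show "{I. I \<subseteq> U \<and> card I = s} \<noteq> {}"
    using assms(2) by (metis card.empty zero_less_binomial_iff less_irrefl)
qed

lemma card_hypergeometric_upper_tail:
  fixes g x :: real
  assumes U: "finite U" and A: "A \<subseteq> U" and s: "1 \<le> s" "s \<le> card U" and g: "0 \<le> g"
    and x: "real (card A) * real s / real (card U) + g \<le> x"
  shows "real (card {I. I \<subseteq> U \<and> card I = s \<and> x \<le> real (card (I \<inter> A))})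
         \<le> exp (- 2 * g\<^sup>2 / real s) * real (card U choose s)"
proof -
  define S where "S = {I. I \<subseteq> U \<and> card I = s}"
  define B where "B = {I. I \<subseteq> U \<and> card I = s \<and> x \<le> real (card (I \<inter> A))}"
  define p where "p = real (card A) / real (card U)"
  \<comment> \<open>Chernoff's bound, with the exponent \<open>l\<close> that minimises \<open>s (l p + l\<^sup>2 / 8) - l (s p + g)\<close>.\<close>
  define l where "l = 4 * g / real s"
  define a where "a = exp l - 1"
  have l: "0 \<le> l" using g s by (simp add: l_def)
  have a: "0 \<le> a" using l by (simp add: a_def)
  have p: "0 \<le> p" by (simp add: p_def)
  have fS: "finite S" unfolding S_def using subsets_of_card_finite_nonempty[OF U s(2)] by simp
  have BS: "B \<subseteq> S" unfolding B_def S_def by blast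
  have "real (card B) * exp (l * x) = (\<Sum>I\<in>B. exp (l * x))" by simp
  also have "\<dots> \<le> (\<Sum>I\<in>B. (1 + a) ^ card (I \<inter> A))"
  proof (rule sum_mono)
    fix I assume "I \<in> B"
    then have "l * x \<le> real (card (I \<inter> A)) * l"
      using l unfolding B_def by (simp add: mult.commute mult_left_mono)
    then show "exp (l * x) \<le> (1 + a) ^ card (I \<inter> A)" by (simp add: a_def flip: exp_of_nat_mult)
  qed
  also have "\<dots> \<le> (\<Sum>I\<in>S. (1 + a) ^ card (I \<inter> A))"
    using fS BS a by (intro sum_mono2) auto
  also have "\<dots> \<le> real (card U choose s) * (1 + a * p) ^ s"
    using sum_power_card_Int_le[OF U A s(2) a] unfolding S_def p_def by simp
  also have "(1 + a * p) ^ s \<le> exp (l * p + l\<^sup>2 / 8) ^ s"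
    using Hoeffdings_lemma_exp[OF l p] a p by (intro power_mono) (simp_all add: a_def mult.commute)
  also have "\<dots> = exp (real s * (l * p + l\<^sup>2 / 8))" by (simp add: exp_of_nat_mult)
  finally have "real (card B) * exp (l * x)
                \<le> real (card U choose s) * exp (real s * (l * p + l\<^sup>2 / 8))"
    by (simp add: mult_left_mono)
  then have "real (card B)
             \<le> real (card U choose s) * exp (real s * (l * p + l\<^sup>2 / 8)) / exp (l * x)"
    by (simp add: pos_le_divide_eq)
  also have "\<dots> = real (card U choose s) * exp (real s * (l * p + l\<^sup>2 / 8) - l * x)"
    by (simp add: exp_diff)
  also have "\<dots> \<le> real (card U choose s) * exp (- 2 * g\<^sup>2 / real s)"
  proof -
    have "l * (real s * p + g) \<le> l * x"
      using x l by (intro mult_left_mono) (simp_all add: p_def mult.commute)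
    moreover have "real s * (l * p + l\<^sup>2 / 8) - l * (real s * p + g) = - 2 * g\<^sup>2 / real s"
      using s by (simp add: l_def power2_eq_square field_simps)
    ultimately have "real s * (l * p + l\<^sup>2 / 8) - l * x \<le> - 2 * g\<^sup>2 / real s" by linarith
    then show ?thesis by (intro mult_left_mono) simp_all
  qed
  finally show ?thesis unfolding B_def by (simp add: mult.commute)
qed

lemma hypergeometric_upper_tail:
  fixes g x :: real
  assumes U: "finite U" and A: "A \<subseteq> U" and s: "1 \<le> s" "s \<le> card U" and g: "0 \<le> g"
    and x: "real (card A) * real s / real (card U) + g \<le> x"
  shows "measure_pmf.prob (pmf_of_set {I. I \<subseteq> U \<and> card I = s}) {I. x \<le> real (card (I \<inter> A))}
         \<le> exp (- 2 * g\<^sup>2 / real s)"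
proof -
  note S = subsets_of_card_finite_nonempty[OF U s(2)]
  have pos: "0 < real (card U choose s)" using s by simp
  have "{I. I \<subseteq> U \<and> card I = s} \<inter> {I. x \<le> real (card (I \<inter> A))}
        = {I. I \<subseteq> U \<and> card I = s \<and> x \<le> real (card (I \<inter> A))}" by blast
  then have "measure_pmf.prob (pmf_of_set {I. I \<subseteq> U \<and> card I = s}) {I. x \<le> real (card (I \<inter> A))}
        = real (card {I. I \<subseteq> U \<and> card I = s \<and> x \<le> real (card (I \<inter> A))}) / real (card U choose s)"
    using S by (simp add: measure_pmf_of_set n_subsets[OF U])
  also have "\<dots> \<le> exp (- 2 * g\<^sup>2 / real s)"
    using card_hypergeometric_upper_tail[OF assms] pos by (simp add: pos_divide_le_eq)
  finally show ?thesis .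
qed

lemma hypergeometric_lower_tail:
  fixes g x :: real
  assumes U: "finite U" and A: "A \<subseteq> U" and s: "1 \<le> s" "s \<le> card U" and g: "0 \<le> g"
    and x: "x \<le> real (card A) * real s / real (card U) - g"
  shows "measure_pmf.prob (pmf_of_set {I. I \<subseteq> U \<and> card I = s}) {I. real (card (I \<inter> A)) \<le> x}
         \<le> exp (- 2 * g\<^sup>2 / real s)"
proof -
  define S where "S = {I. I \<subseteq> U \<and> card I = s}"
  note S = subsets_of_card_finite_nonempty[OF U s(2), folded S_def]
  have split: "card (I \<inter> A) + card (I \<inter> (U - A)) = s" if "I \<in> S" for I
  proof -
    have "finite I" using that U unfolding S_def by (auto intro: finite_subset)
    have "card I = card ((I \<inter> A) \<union> (I \<inter> (U - A)))"
      using that unfolding S_def by (intro arg_cong[where f = card]) blast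
    also have "\<dots> = card (I \<inter> A) + card (I \<inter> (U - A))"
      using \<open>finite I\<close> by (intro card_Un_disjoint) auto
    finally show ?thesis using that unfolding S_def by simp
  qed
  have complement: "real s - x \<le> real (card (I \<inter> (U - A)))"
    if "I \<in> S" "real (card (I \<inter> A)) \<le> x" for I
  proof -
    have "real (card (I \<inter> A)) + real (card (I \<inter> (U - A))) = real s"
      using split[OF that(1)] by (metis of_nat_add)
    then show ?thesis using that(2) by linarith
  qed
  have "measure_pmf.prob (pmf_of_set S) {I. real (card (I \<inter> A)) \<le> x}
        \<le> measure_pmf.prob (pmf_of_set S) {I. real s - x \<le> real (card (I \<inter> (U - A)))}"
    using S complement by (intro measure_pmf.finite_measure_mono_AE) (auto simp: AE_measure_pmf_iff)
  also have "\<dots> \<le> exp (- 2 * g\<^sup>2 / real s)"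
    unfolding S_def
  proof (rule hypergeometric_upper_tail[OF U _ s g])
    have "0 < card U" using s by simp
    moreover have "card (U - A) = card U - card A" "card A \<le> card U"
      using A U by (auto simp: card_Diff_subset finite_subset card_mono)
    ultimately show "real (card (U - A)) * real s / real (card U) + g \<le> real s - x"
      using x by (simp add: of_nat_diff field_simps)
  qed auto
  finally show ?thesis unfolding S_def .
qed

section \<open>Ranks of sampled positions\<close>

lemma card_Int_lessThan_nth_sorted_list_of_set:
  assumes "finite R" "i < card R"
  shows "card (R \<inter> {..<sorted_list_of_set R ! i}) = i"
proof -
  define L where "L = sorted_list_of_set R"
  have L: "sorted_wrt (<) L" "sorted L" "set L = R" "length L = card R" "distinct L"
    using assms(1) by (simp_all add: L_def)
  have "R \<inter> {..<L ! i} = nth L ` {..<i}"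
  proof (intro equalityI subsetI)
    fix x assume x: "x \<in> R \<inter> {..<L ! i}"
    then obtain j where j: "j < length L" "x = L ! j" using L(3) by (auto simp: in_set_conv_nth)
    have "j < i"
    proof (rule ccontr)
      assume "\<not> j < i"
      then have "L ! i \<le> L ! j" using L(2) j(1) by (intro sorted_nth_mono) auto
      then show False using x j(2) by (auto dest: leD)
    qed
    then show "x \<in> nth L ` {..<i}" using j(2) by blast
  next
    fix x assume "x \<in> nth L ` {..<i}"
    then obtain j where "j < i" "x = L ! j" by blast
    then show "x \<in> R \<inter> {..<L ! i}"
      using L(1,3,4) assms(2) sorted_wrt_nth_less[OF L(1)] by auto
  qed
  moreover have "inj_on (nth L) {..<i}" using L(4,5) assms(2) by (intro inj_on_nth) auto
  ultimately show ?thesis unfolding L_def by (simp add: card_image)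
qed

lemma nth_sorted_list_of_set_less_iff:
  assumes "finite R" "i < card R"
  shows "sorted_list_of_set R ! i < t \<longleftrightarrow> i < card (R \<inter> {..<t})"
proof -
  define x where "x = sorted_list_of_set R ! i"
  have x: "x \<in> R"
    using assms unfolding x_def by (metis length_sorted_list_of_set nth_mem set_sorted_list_of_set)
  have below: "card (R \<inter> {..<x}) = i"
    unfolding x_def by (rule card_Int_lessThan_nth_sorted_list_of_set[OF assms])
  show ?thesis
  proof
    assume "sorted_list_of_set R ! i < t"
    then have "insert x (R \<inter> {..<x}) \<subseteq> R \<inter> {..<t}" using x unfolding x_def by auto
    then have "card (insert x (R \<inter> {..<x})) \<le> card (R \<inter> {..<t})"
      using assms(1) by (intro card_mono) auto
    then show "i < card (R \<inter> {..<t})" using below assms(1) by simp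
  next
    assume "i < card (R \<inter> {..<t})"
    show "sorted_list_of_set R ! i < t"
    proof (rule ccontr)
      assume "\<not> sorted_list_of_set R ! i < t"
      then have "R \<inter> {..<t} \<subseteq> R \<inter> {..<x}" unfolding x_def by auto
      then have "card (R \<inter> {..<t}) \<le> i" using below assms(1) by (metis card_mono finite_Int)
      then show False using \<open>i < card (R \<inter> {..<t})\<close> by simp
    qed
  qed
qed

lemma card_Int_greaterThan_nth_sorted_list_of_set:
  assumes "finite R" "i < card R"
  shows "card (R \<inter> {sorted_list_of_set R ! i<..}) = card R - Suc i"
proof -
  define x where "x = sorted_list_of_set R ! i"
  have x: "x \<in> R"
    using assms unfolding x_def by (metis length_sorted_list_of_set nth_mem set_sorted_list_of_set)
  have "R = insert x ((R \<inter> {..<x}) \<union> (R \<inter> {x<..}))" using x by auto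
  also have "card \<dots> = Suc (card (R \<inter> {..<x}) + card (R \<inter> {x<..}))"
    using assms(1) by (subst card_insert_disjoint) (auto intro: card_Un_disjoint)
  finally have "card R = Suc (card (R \<inter> {..<x}) + card (R \<inter> {x<..}))" .
  then show ?thesis
    using card_Int_lessThan_nth_sorted_list_of_set[OF assms] unfolding x_def by simp
qed

text \<open>
  Ranks are indices into \<open>sort xs\<close> and count from 0, while the \<open>i\<close> of \<open>sample_rank xs I i\<close>
  counts from 1, like that of \<open>y\<^sup>*\<^sub>i\<close> (see \<open>ystar_eq_nth_sort\<close>).
\<close>

definition ranking :: "'a::linorder list \<Rightarrow> nat list" where
  "ranking xs = sort_key (nth xs) [0..<length xs]"

definition ranks :: "'a::linorder list \<Rightarrow> nat set \<Rightarrow> nat set" where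
  "ranks xs I = {r. r < length xs \<and> ranking xs ! r \<in> I}"

definition sample_rank :: "'a::linorder list \<Rightarrow> nat set \<Rightarrow> nat \<Rightarrow> nat" where
  "sample_rank xs I i = sorted_list_of_set (ranks xs I) ! (i - 1)"

lemma mset_ranking: "mset (ranking xs) = mset [0..<length xs]"
  by (simp add: ranking_def)

lemma length_ranking [simp]: "length (ranking xs) = length xs"
  by (simp add: ranking_def)

lemma bij_betw_nth_ranking: "bij_betw (nth (ranking xs)) {..<length xs} {..<length xs}"
proof (rule bij_betw_nth)
  show "distinct (ranking xs)" using mset_ranking by (metis distinct_upt mset_eq_imp_distinct_iff)
  show "{..<length xs} = set (ranking xs)"
    using mset_eq_setD[OF mset_ranking, of xs] by (simp add: lessThan_atLeast0)
qed simp

lemma image_nth_ranking: "nth (ranking xs) ` {..<length xs} = {..<length xs}"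
  using bij_betw_imp_surj_on[OF bij_betw_nth_ranking] .

lemma nth_ranking_surj:
  assumes "j < length xs"
  obtains r where "r < length xs" "ranking xs ! r = j"
proof -
  have "j \<in> nth (ranking xs) ` {..<length xs}" using assms by (subst image_nth_ranking) simp
  then show ?thesis using that by blast
qed

lemma inj_on_nth_ranking: "inj_on (nth (ranking xs)) {..<length xs}"
  using bij_betw_imp_inj_on[OF bij_betw_nth_ranking] .

lemma nth_ranking_less: "r < length xs \<Longrightarrow> ranking xs ! r < length xs"
  using bij_betwE[OF bij_betw_nth_ranking] by blast

lemma map_nth_ranking: "map (nth xs) (ranking xs) = sort xs"
proof (rule properties_for_sort[symmetric])
  have "mset (map (nth xs) (ranking xs)) = mset (map (nth xs) [0..<length xs])"
    by (simp only: mset_map mset_ranking)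
  then show "mset (map (nth xs) (ranking xs)) = mset xs" by (simp add: map_nth)
  show "sorted (map (nth xs) (ranking xs))" by (simp add: ranking_def)
qed

lemma nth_nth_ranking: "r < length xs \<Longrightarrow> xs ! (ranking xs ! r) = sort xs ! r"
  by (metis length_ranking map_nth_ranking nth_map)

lemma nth_sort_less_imp_less:
  assumes "r < length xs" "a < length xs" "sort xs ! r < sort xs ! a"
  shows "r < a"
proof (rule ccontr)
  assume "\<not> r < a"
  then have "sort xs ! a \<le> sort xs ! r" using assms(1) by (intro sorted_nth_mono) auto
  then show False using assms(3) leD by blast
qed

lemma image_ranking_ranks:
  assumes "I \<subseteq> {..<length xs}"
  shows "nth (ranking xs) ` ranks xs I = I"
proof (intro equalityI subsetI)
  fix j assume "j \<in> nth (ranking xs) ` ranks xs I"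
  then show "j \<in> I" by (auto simp: ranks_def)
next
  fix j assume "j \<in> I"
  moreover obtain r where "r < length xs" "ranking xs ! r = j"
    using \<open>j \<in> I\<close> assms nth_ranking_surj by blast
  ultimately show "j \<in> nth (ranking xs) ` ranks xs I" unfolding ranks_def by blast
qed

lemma card_ranks:
  assumes "I \<subseteq> {..<length xs}"
  shows "card (ranks xs I) = card I"
proof -
  have "inj_on (nth (ranking xs)) (ranks xs I)"
    using inj_on_nth_ranking by (rule inj_on_subset) (auto simp: ranks_def)
  from card_image[OF this] show ?thesis unfolding image_ranking_ranks[OF assms] by simp
qed

lemma card_ranks_Int_lessThan:
  assumes "t \<le> length xs"
  shows "card (ranks xs I \<inter> {..<t}) = card (I \<inter> nth (ranking xs) ` {..<t})"
proof -
  have inj: "inj_on (nth (ranking xs)) {..<length xs}" by (rule inj_on_nth_ranking)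
  then have img: "nth (ranking xs) ` (ranks xs I \<inter> {..<t}) = I \<inter> nth (ranking xs) ` {..<t}"
    using assms unfolding ranks_def by (auto simp: inj_on_eq_iff)
  have "inj_on (nth (ranking xs)) (ranks xs I \<inter> {..<t})"
    using inj by (rule inj_on_subset) (auto simp: ranks_def)
  from card_image[OF this] show ?thesis unfolding img by simp
qed

lemma card_positions_eq_card_ranks:
  "card {j \<in> {..<length xs}. j \<notin> I \<and> P (xs ! j)}
   = card {r \<in> {..<length xs}. r \<notin> ranks xs I \<and> P (sort xs ! r)}"
proof -
  let ?R = "{r \<in> {..<length xs}. r \<notin> ranks xs I \<and> P (sort xs ! r)}"
  have img: "nth (ranking xs) ` ?R = {j \<in> {..<length xs}. j \<notin> I \<and> P (xs ! j)}"
  proof (intro equalityI subsetI)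
    fix j assume "j \<in> nth (ranking xs) ` ?R"
    then obtain r where "r \<in> ?R" "j = ranking xs ! r" by blast
    then show "j \<in> {j \<in> {..<length xs}. j \<notin> I \<and> P (xs ! j)}"
      by (auto simp: ranks_def nth_nth_ranking nth_ranking_less)
  next
    fix j assume j: "j \<in> {j \<in> {..<length xs}. j \<notin> I \<and> P (xs ! j)}"
    then obtain r where "r < length xs" "j = ranking xs ! r"
      by (metis nth_ranking_surj mem_Collect_eq lessThan_iff)
    then show "j \<in> nth (ranking xs) ` ?R" using j by (auto simp: ranks_def nth_nth_ranking)
  qed
  have "inj_on (nth (ranking xs)) ?R"
    using inj_on_nth_ranking by (rule inj_on_subset) auto
  from card_image[OF this] show ?thesis unfolding img by simp
qed

lemma sample_sorted_eq_map_sort: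
  assumes I: "I \<subseteq> {..<length xs}"
  shows "sample_sorted xs I = map (nth (sort xs)) (sorted_list_of_set (ranks xs I))"
  unfolding sample_sorted_def
proof (rule properties_for_sort)
  let ?R = "ranks xs I"
  have fR: "finite ?R" and R: "?R \<subseteq> {..<length xs}" by (auto simp: ranks_def)
  have fI: "finite I" using I finite_subset by blast
  have inj: "inj_on (nth (ranking xs)) ?R"
    using inj_on_nth_ranking R by (rule inj_on_subset)
  have mset_sorted: "mset (sorted_list_of_set A) = mset_set A" for A :: "nat set"
    by (metis mset_sorted_list_of_multiset sorted_list_of_mset_set)
  have "mset (map (nth (sort xs)) (sorted_list_of_set ?R))
        = image_mset (nth (sort xs)) (mset_set ?R)"
    by (simp add: mset_sorted)
  also have "\<dots> = image_mset (nth xs) (image_mset (nth (ranking xs)) (mset_set ?R))"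
    using fR R by (auto simp: multiset.map_comp nth_nth_ranking intro!: image_mset_cong)
  also have "\<dots> = mset (map (nth xs) (sorted_list_of_set I))"
    by (simp add: image_mset_mset_set[OF inj] image_ranking_ranks[OF I] mset_sorted)
  finally show "mset (map (nth (sort xs)) (sorted_list_of_set ?R))
                = mset (map (nth xs) (sorted_list_of_set I))" .
  show "sorted (map (nth (sort xs)) (sorted_list_of_set ?R))"
  proof (rule sorted_map_mono)
    show "mono_on (set (sorted_list_of_set ?R)) (nth (sort xs))"
      using fR R by (intro mono_onI sorted_nth_mono) auto
  qed simp
qed

lemma card_image_ranking_lessThan:
  assumes "t \<le> length xs"
  shows "card (nth (ranking xs) ` {..<t}) = t"
proof -
  have "inj_on (nth (ranking xs)) {..<t}"
    using inj_on_nth_ranking by (rule inj_on_subset) (use assms in auto)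
  then show ?thesis by (simp add: card_image)
qed

lemma image_ranking_lessThan_subset:
  assumes "t \<le> length xs"
  shows "nth (ranking xs) ` {..<t} \<subseteq> {..<length xs}"
proof
  fix j assume "j \<in> nth (ranking xs) ` {..<t}"
  then obtain r where "r < t" "j = ranking xs ! r" by blast
  then show "j \<in> {..<length xs}" using nth_ranking_less[of r xs] assms by simp
qed

lemma card_less_nth_sort:
  assumes "a < length xs"
  shows "card {j \<in> {..<length xs}. xs ! j < sort xs ! a} \<le> a"
proof -
  have "card {j \<in> {..<length xs}. xs ! j < sort xs ! a}
        = card {r \<in> {..<length xs}. sort xs ! r < sort xs ! a}"
    using card_positions_eq_card_ranks[of xs "{}" "\<lambda>y. y < sort xs ! a"] by (simp add: ranks_def)
  also have "\<dots> \<le> card {..<a}"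
    using nth_sort_less_imp_less[OF _ assms] by (intro card_mono) auto
  finally show ?thesis by simp
qed

lemma card_greater_nth_sort:
  assumes "b < length xs"
  shows "card {j \<in> {..<length xs}. sort xs ! b < xs ! j} \<le> length xs - Suc b"
proof -
  have "card {j \<in> {..<length xs}. sort xs ! b < xs ! j}
        = card {r \<in> {..<length xs}. sort xs ! b < sort xs ! r}"
    using card_positions_eq_card_ranks[of xs "{}" "\<lambda>y. sort xs ! b < y"] by (simp add: ranks_def)
  also have "\<dots> \<le> card {b<..<length xs}"
    using nth_sort_less_imp_less[OF assms] by (intro card_mono) auto
  finally show ?thesis by simp
qed

lemma card_between_nth_sort:
  assumes "a < length xs" "b < length xs"
  shows "card {j \<in> {..<length xs}. sort xs ! a < xs ! j \<and> xs ! j < sort xs ! b} \<le> b - Suc a"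
proof -
  have "card {j \<in> {..<length xs}. sort xs ! a < xs ! j \<and> xs ! j < sort xs ! b}
        = card {r \<in> {..<length xs}. sort xs ! a < sort xs ! r \<and> sort xs ! r < sort xs ! b}"
    using card_positions_eq_card_ranks[of xs "{}" "\<lambda>y. sort xs ! a < y \<and> y < sort xs ! b"]
    by (simp add: ranks_def)
  also have "\<dots> \<le> card {a<..<b}"
    using nth_sort_less_imp_less[OF assms(1)] nth_sort_less_imp_less[OF _ assms(2)]
    by (intro card_mono) auto
  finally show ?thesis by simp
qed

context
  fixes xs :: "'a::linorder list" and I :: "nat set" and i :: nat
  assumes I: "I \<subseteq> {..<length xs}" and i: "1 \<le> i" "i \<le> card I"
begin

private lemma ranks_facts:
  "finite (ranks xs I)" "ranks xs I \<subseteq> {..<length xs}" "card (ranks xs I) = card I"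
  using card_ranks[OF I] by (auto simp: ranks_def)

lemma sample_rank_less_length: "sample_rank xs I i < length xs"
proof -
  have "i - 1 < length (sorted_list_of_set (ranks xs I))" using ranks_facts i by simp
  then have "sample_rank xs I i \<in> set (sorted_list_of_set (ranks xs I))"
    unfolding sample_rank_def by (rule nth_mem)
  then have "sample_rank xs I i \<in> ranks xs I" using ranks_facts by simp
  then show ?thesis using ranks_facts(2) by blast
qed

lemma ystar_eq_nth_sort: "ystar xs I i = sort xs ! sample_rank xs I i"
  using ranks_facts i
  by (simp add: ystar_def sample_sorted_eq_map_sort[OF I] sample_rank_def)

lemma sample_rank_less_iff:
  assumes "t \<le> length xs"
  shows "sample_rank xs I i < t \<longleftrightarrow> i \<le> card (I \<inter> nth (ranking xs) ` {..<t})"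
  using nth_sorted_list_of_set_less_iff[of "ranks xs I" "i - 1" t] ranks_facts i
    card_ranks_Int_lessThan[OF assms]
  by (simp add: sample_rank_def) arith

lemma card_unsampled_below_sample_rank:
  "card {j \<in> {..<length xs}. j \<notin> I \<and> xs ! j < sort xs ! sample_rank xs I i} + (i - 1)
   \<le> sample_rank xs I i"
proof -
  define R where "R = ranks xs I"
  define b where "b = sample_rank xs I i"
  have R: "finite R" "card R = card I" using ranks_facts unfolding R_def by simp_all
  have below: "card (R \<inter> {..<b}) = i - 1"
    using card_Int_lessThan_nth_sorted_list_of_set[of R "i - 1"] R i
    unfolding b_def sample_rank_def R_def by simp
  have "card {j \<in> {..<length xs}. j \<notin> I \<and> xs ! j < sort xs ! b}
        = card {r \<in> {..<length xs}. r \<notin> R \<and> sort xs ! r < sort xs ! b}"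
    unfolding R_def by (rule card_positions_eq_card_ranks)
  also have "\<dots> \<le> card ({..<b} - R)"
    using nth_sort_less_imp_less[OF _ sample_rank_less_length, folded b_def]
    by (intro card_mono) auto
  also have "\<dots> = b - (i - 1)"
    using below by (simp add: card_Diff_subset_Int Int_commute)
  finally show ?thesis
    using below card_mono[of "{..<b}" "R \<inter> {..<b}"] unfolding b_def by simp
qed

lemma card_unsampled_above_sample_rank:
  "card {j \<in> {..<length xs}. j \<notin> I \<and> sort xs ! sample_rank xs I i < xs ! j} + (card I - i)
   \<le> length xs - Suc (sample_rank xs I i)"
proof -
  define R where "R = ranks xs I"
  define a where "a = sample_rank xs I i"
  have R: "finite R" "R \<subseteq> {..<length xs}" "card R = card I"
    using ranks_facts unfolding R_def by simp_all
  have "card (R \<inter> {a<..}) = card I - i"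
    using card_Int_greaterThan_nth_sorted_list_of_set[of R "i - 1"] R i
    unfolding a_def sample_rank_def R_def by simp
  moreover have "{a<..<length xs} \<inter> R = R \<inter> {a<..}" using R(2) by auto
  ultimately have above: "card ({a<..<length xs} \<inter> R) = card I - i" by simp
  have "card {j \<in> {..<length xs}. j \<notin> I \<and> sort xs ! a < xs ! j}
        = card {r \<in> {..<length xs}. r \<notin> R \<and> sort xs ! a < sort xs ! r}"
    unfolding R_def by (rule card_positions_eq_card_ranks)
  also have "\<dots> \<le> card ({a<..<length xs} - R)"
    using nth_sort_less_imp_less[OF sample_rank_less_length, folded a_def]
    by (intro card_mono) auto
  also have "\<dots> = (length xs - Suc a) - (card I - i)"
    using above by (simp add: card_Diff_subset_Int)
  finally show ?thesis
    using above card_mono[of "{a<..<length xs}" "{a<..<length xs} \<inter> R"] unfolding a_def by simp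
qed

end

section \<open>Concentration of sample order statistics\<close>

lemma set_pmf_sample_dist:
  assumes "s \<le> n"
  shows "set_pmf (sample_dist n s) = {I. I \<subseteq> {..<n} \<and> card I = s}"
  unfolding sample_dist_def
  using subsets_of_card_finite_nonempty[of "{..<n}" s] assms by (intro set_pmf_of_set) simp_all

lemma prob_sample_dist_mono:
  assumes "s \<le> n" and "\<And>I. I \<subseteq> {..<n} \<Longrightarrow> card I = s \<Longrightarrow> P I \<Longrightarrow> Q I"
  shows "measure_pmf.prob (sample_dist n s) {I. P I} \<le> measure_pmf.prob (sample_dist n s) {I. Q I}"
  using assms by (intro measure_pmf.finite_measure_mono_AE)
    (auto simp: AE_measure_pmf_iff set_pmf_sample_dist)

definition near_expected_rank :: "nat \<Rightarrow> nat \<Rightarrow> real \<Rightarrow> nat \<Rightarrow> nat \<Rightarrow> bool" where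
  "near_expected_rank n s g i a \<longleftrightarrow>
     (real i - g) * (real n / real s) - 1 < real a \<and> real a < (real i - 1 + g) * (real n / real s)"

lemma prob_sampled_among_smallest:
  fixes g x :: real
  assumes s: "1 \<le> s" "s \<le> length xs" and g: "0 \<le> g" and t: "t \<le> length xs"
  defines "A \<equiv> nth (ranking xs) ` {..<t}" and "m \<equiv> real t * real s / real (length xs)"
  shows "x \<le> m - g \<Longrightarrow> measure_pmf.prob (sample_dist (length xs) s)
           {I. real (card (I \<inter> A)) \<le> x} \<le> exp (- 2 * g\<^sup>2 / real s)"
    and "m + g \<le> x \<Longrightarrow> measure_pmf.prob (sample_dist (length xs) s)
           {I. x \<le> real (card (I \<inter> A))} \<le> exp (- 2 * g\<^sup>2 / real s)"
proof -
  have A: "A \<subseteq> {..<length xs}" "card A = t"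
    using image_ranking_lessThan_subset[OF t] card_image_ranking_lessThan[OF t]
    unfolding A_def by simp_all
  show "x \<le> m - g \<Longrightarrow> measure_pmf.prob (sample_dist (length xs) s)
          {I. real (card (I \<inter> A)) \<le> x} \<le> exp (- 2 * g\<^sup>2 / real s)"
    using hypergeometric_lower_tail[of "{..<length xs}" A s g x] A s g
    unfolding sample_dist_def m_def by simp
  show "m + g \<le> x \<Longrightarrow> measure_pmf.prob (sample_dist (length xs) s)
          {I. x \<le> real (card (I \<inter> A))} \<le> exp (- 2 * g\<^sup>2 / real s)"
    using hypergeometric_upper_tail[of "{..<length xs}" A s g x] A s g
    unfolding sample_dist_def m_def by simp
qed

context
  fixes xs :: "'a::linorder list" and s i :: nat and g :: real
  assumes s: "1 \<le> s" "s \<le> length xs" and g: "0 \<le> g" and i: "1 \<le> i" "i \<le> s"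
begin

private lemma sizes_nonzero: "real s \<noteq> 0" "real (length xs) \<noteq> 0"
  using s by auto

lemma prob_sample_rank_high:
  "measure_pmf.prob (sample_dist (length xs) s)
     {I. (real i - 1 + g) * (real (length xs) / real s) \<le> real (sample_rank xs I i)}
   \<le> exp (- 2 * g\<^sup>2 / real s)"
proof -
  define n where "n = length xs"
  define x where "x = (real i - 1 + g) * (real n / real s)"
  define t where "t = nat \<lceil>x\<rceil>"
  have t_le: "t \<le> a" if "x \<le> real a" for a
    using that unfolding t_def by (simp add: nat_le_iff ceiling_le_iff)
  have "measure_pmf.prob (sample_dist n s) {I. x \<le> real (sample_rank xs I i)}
        \<le> exp (- 2 * g\<^sup>2 / real s)" (is "?p \<le> ?e")
  proof (cases "t < n")
    case True
    have "?p \<le> measure_pmf.prob (sample_dist n s)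
              {I. real (card (I \<inter> nth (ranking xs) ` {..<t})) \<le> real i - 1}"
    proof (rule prob_sample_dist_mono)
      fix I assume I: "I \<subseteq> {..<n}" "card I = s" and "x \<le> real (sample_rank xs I i)"
      then have "\<not> sample_rank xs I i < t" using t_le by (simp add: not_less)
      then show "real (card (I \<inter> nth (ranking xs) ` {..<t})) \<le> real i - 1"
        using sample_rank_less_iff[of I xs i t] I i True unfolding n_def by simp
    qed (use s n_def in simp)
    also have "\<dots> \<le> ?e"
      unfolding n_def
    proof (rule prob_sampled_among_smallest(1))
      have "x \<le> real t" unfolding t_def by (rule real_nat_ceiling_ge)
      then have "x * real s / real n \<le> real t * real s / real n"
        by (intro divide_right_mono mult_right_mono) simp_all
      moreover have "x * real s / real n = real i - 1 + g"
        using sizes_nonzero unfolding x_def n_def by (simp add: field_simps)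
      ultimately show "real i - 1 \<le> real t * real s / real (length xs) - g" unfolding n_def by simp
    qed (use s g True n_def in simp_all)
    finally show ?thesis .
  next
    case False
    have "?p \<le> measure_pmf.prob (sample_dist n s) {I. False}"
    proof (rule prob_sample_dist_mono)
      fix I assume "I \<subseteq> {..<n}" "card I = s" "x \<le> real (sample_rank xs I i)"
      then show False
        using sample_rank_less_length[of I xs i] i t_le False unfolding n_def by fastforce
    qed (use s n_def in simp)
    then show ?thesis by (simp add: order_trans[OF _ exp_ge_zero])
  qed
  then show ?thesis unfolding x_def n_def .
qed

lemma prob_sample_rank_low:
  "measure_pmf.prob (sample_dist (length xs) s)
     {I. real (sample_rank xs I i) \<le> (real i - g) * (real (length xs) / real s) - 1}
   \<le> exp (- 2 * g\<^sup>2 / real s)"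
proof -
  define n where "n = length xs"
  define y where "y = (real i - g) * (real n / real s)"
  define t where "t = nat \<lfloor>y\<rfloor>"
  have less_t: "a < t" if "real a \<le> y - 1" for a
  proof -
    have "int a + 1 \<le> \<lfloor>y\<rfloor>" using that by (simp add: le_floor_iff)
    then show ?thesis unfolding t_def by simp
  qed
  have "measure_pmf.prob (sample_dist n s) {I. real (sample_rank xs I i) \<le> y - 1}
        \<le> exp (- 2 * g\<^sup>2 / real s)" (is "?p \<le> ?e")
  proof (cases "0 \<le> y")
    case True
    have t_y: "real t \<le> y" unfolding t_def using True by (rule of_nat_floor)
    also have "y \<le> real s * (real n / real s)"
      unfolding y_def using i g by (intro mult_right_mono) simp_all
    finally have t_n: "t \<le> n" using sizes_nonzero unfolding n_def by simp
    have "?p \<le> measure_pmf.prob (sample_dist n s)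
              {I. real i \<le> real (card (I \<inter> nth (ranking xs) ` {..<t}))}"
    proof (rule prob_sample_dist_mono)
      fix I assume I: "I \<subseteq> {..<n}" "card I = s" and "real (sample_rank xs I i) \<le> y - 1"
      then have "sample_rank xs I i < t" using less_t by simp
      then show "real i \<le> real (card (I \<inter> nth (ranking xs) ` {..<t}))"
        using sample_rank_less_iff[of I xs i t] I i t_n unfolding n_def by simp
    qed (use s n_def in simp)
    also have "\<dots> \<le> ?e"
      unfolding n_def
    proof (rule prob_sampled_among_smallest(2))
      have "real t * real s / real n \<le> y * real s / real n"
        using t_y by (intro divide_right_mono mult_right_mono) simp_all
      moreover have "y * real s / real n = real i - g"
        using sizes_nonzero unfolding y_def n_def by (simp add: field_simps)
      ultimately show "real t * real s / real (length xs) + g \<le> real i" unfolding n_def by simp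
    qed (use s g t_n n_def in simp_all)
    finally show ?thesis .
  next
    case False
    then have "{I. real (sample_rank xs I i) \<le> y - 1} = {}" by auto
    then show ?thesis by (simp add: order_trans[OF _ exp_ge_zero])
  qed
  then show ?thesis unfolding y_def n_def .
qed

lemma prob_not_near_expected_rank:
  "measure_pmf.prob (sample_dist (length xs) s)
     {I. \<not> near_expected_rank (length xs) s g i (sample_rank xs I i)}
   \<le> 2 * exp (- 2 * g\<^sup>2 / real s)"
proof -
  let ?P = "measure_pmf.prob (sample_dist (length xs) s)"
  let ?low = "{I. real (sample_rank xs I i) \<le> (real i - g) * (real (length xs) / real s) - 1}"
  let ?high = "{I. (real i - 1 + g) * (real (length xs) / real s) \<le> real (sample_rank xs I i)}"
  have "{I. \<not> near_expected_rank (length xs) s g i (sample_rank xs I i)} = ?low \<union> ?high"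
    by (auto simp: near_expected_rank_def not_less)
  then have "?P {I. \<not> near_expected_rank (length xs) s g i (sample_rank xs I i)}
             \<le> ?P ?low + ?P ?high"
    using measure_Un_le[of ?low "measure_pmf (sample_dist (length xs) s)" ?high] by simp
  also have "\<dots> \<le> 2 * exp (- 2 * g\<^sup>2 / real s)"
    using prob_sample_rank_low prob_sample_rank_high by simp
  finally show ?thesis .
qed

end

section \<open>Pivots near their expected ranks\<close>

lemma idx_u_bounds:
  fixes k n s :: nat and g :: real
  assumes "k \<le> n" "1 \<le> s" "0 \<le> g"
  defines "r \<equiv> real k * real s / real n"
  shows "1 \<le> idx_u n k s g" "idx_u n k s g \<le> s" "r - g \<le> real (idx_u n k s g)"
    "idx_u n k s g = 1 \<or> real (idx_u n k s g) < r - g + 1"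
proof -
  have "r \<le> real s"
    unfolding r_def using assms(1) by (cases "n = 0") (simp_all add: field_simps mult_right_mono)
  then have "\<lceil>r - g\<rceil> \<le> int s" using assms(3) by (simp add: ceiling_le_iff)
  moreover have u: "idx_u n k s g = nat (max \<lceil>r - g\<rceil> 1)" unfolding idx_u_def r_def ..
  ultimately show "1 \<le> idx_u n k s g" "idx_u n k s g \<le> s" using assms(2) by simp_all
  show "r - g \<le> real (idx_u n k s g)" "idx_u n k s g = 1 \<or> real (idx_u n k s g) < r - g + 1"
    unfolding u by linarith+
qed

lemma idx_v_bounds:
  fixes k n s :: nat and g :: real
  assumes "1 \<le> s" "0 < g"
  defines "r \<equiv> real k * real s / real n"
  shows "1 \<le> idx_v n k s g" "idx_v n k s g \<le> s" "real (idx_v n k s g) < r + g + 1"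
    "idx_v n k s g = s \<or> r + g \<le> real (idx_v n k s g)"
proof -
  have "0 \<le> r" unfolding r_def by simp
  then have "1 \<le> \<lceil>r + g\<rceil>" using assms(2) by (simp add: le_ceiling_iff)
  moreover have v: "idx_v n k s g = nat (min \<lceil>r + g\<rceil> (int s))" unfolding idx_v_def r_def ..
  ultimately show "1 \<le> idx_v n k s g" "idx_v n k s g \<le> s" using assms(1) by linarith+
  show "real (idx_v n k s g) < r + g + 1" "idx_v n k s g = s \<or> r + g \<le> real (idx_v n k s g)"
    unfolding v using \<open>1 \<le> \<lceil>r + g\<rceil>\<close> by linarith+
qed

lemma idx_window:
  fixes k n s :: nat and g :: real
  assumes k: "k \<le> n" and s: "1 \<le> s" "s \<le> n" and g: "0 < g"
  defines "N \<equiv> real n / real s" and "iu \<equiv> idx_u n k s g" and "iv \<equiv> idx_v n k s g"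
  shows "iu \<noteq> 1 \<Longrightarrow> (real iu - 1 + g) * N < real k"
    and "iv \<noteq> s \<Longrightarrow> real k \<le> (real iv - g) * N"
    and "(real iv - 1 + g) * N - (real iu - g) * N < 4 * g * N"
    and "(real iv - 1 + g) * N - (real iv - 1) \<le> real k + 2 * g * N"
    and "real n - real s - (real iu - g) * N + real iu \<le> real n - real k + 2 * g * N"
proof -
  define r where "r = real k * real s / real n"
  have pos: "0 < real s" "0 < real n" using s by simp_all
  then have N: "1 \<le> N" "r * N = real k" "real s * N = real n"
    using s unfolding N_def r_def by simp_all
  have r: "0 \<le> r" "r \<le> real s"
    using k pos unfolding r_def by (simp_all add: field_simps mult_right_mono)
  have U: "r - g \<le> real iu" "iu = 1 \<or> real iu < r - g + 1"
    using idx_u_bounds[OF k s(1) less_imp_le[OF g]] unfolding iu_def r_def by simp_all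
  have V: "real iv < r + g + 1" "iv = s \<or> r + g \<le> real iv"
    using idx_v_bounds[OF s(1) g] unfolding iv_def r_def by simp_all
  show "(real iu - 1 + g) * N < real k" if "iu \<noteq> 1"
    using U(2) that N(1,2) by (simp add: mult_strict_right_mono flip: N(2))
  show "real k \<le> (real iv - g) * N" if "iv \<noteq> s"
    using V(2) that N(1,2) by (simp add: mult_right_mono flip: N(2))
  have "(real iv - 1 + g) - (real iu - g) < 4 * g" using U(1) V(1) by simp
  then have "((real iv - 1 + g) - (real iu - g)) * N < (4 * g) * N"
    using N(1) by (intro mult_strict_right_mono) simp_all
  then show "(real iv - 1 + g) * N - (real iu - g) * N < 4 * g * N" by (simp add: algebra_simps)
  have "(real iv - 1) * (N - 1) \<le> (r + g) * (N - 1)"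
    using V(1) N(1) by (intro mult_right_mono) simp_all
  then show "(real iv - 1 + g) * N - (real iv - 1) \<le> real k + 2 * g * N"
    using N(2) r(1) g by (simp add: algebra_simps)
  have "(r - g) * (N - 1) \<le> real iu * (N - 1)"
    using U(1) N(1) by (intro mult_right_mono) simp_all
  then show "real n - real s - (real iu - g) * N + real iu \<le> real n - real k + 2 * g * N"
    using N(2,3) r(2) g by (simp add: algebra_simps)
qed

context
  fixes xs :: "'a::linorder list" and k s :: nat and g :: real and I :: "nat set"
  assumes k: "k \<le> length xs" and s: "1 \<le> s" "s \<le> length xs" and g: "0 < g"
    and I: "I \<subseteq> {..<length xs}" "card I = s"
    and near_u: "near_expected_rank (length xs) s g (idx_u (length xs) k s g)
                   (sample_rank xs I (idx_u (length xs) k s g))"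
    and near_v: "near_expected_rank (length xs) s g (idx_v (length xs) k s g)
                   (sample_rank xs I (idx_v (length xs) k s g))"
begin

private abbreviation (input) "n \<equiv> length xs"
private abbreviation (input) "N \<equiv> real n / real s"
private abbreviation (input) "iu \<equiv> idx_u n k s g"
private abbreviation (input) "iv \<equiv> idx_v n k s g"
private abbreviation (input) "rank_u \<equiv> sample_rank xs I iu"
private abbreviation (input) "rank_v \<equiv> sample_rank xs I iv"

private lemma sizes: "0 < N" "real s * N = real n" "s \<le> n" "real s \<noteq> 0" "0 < g * N"
proof -
  have "0 < real s" "0 < real n" using s by auto
  then show "0 < N" "real s * N = real n" "real s \<noteq> 0" "0 < g * N" using g by simp_all
  show "s \<le> n" using s by simp
qed

private lemma pivot_indices: "1 \<le> iu" "iu \<le> s" "1 \<le> iv" "iv \<le> s"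
  using idx_u_bounds[OF k s(1) less_imp_le[OF g]] idx_v_bounds[OF s(1) g] by simp_all

private lemma rank_less_length: "rank_u < n" "rank_v < n"
  using sample_rank_less_length[OF I(1)] pivot_indices I(2) by simp_all

private lemma rank_u_window:
  "(real iu - g) * N - 1 < real rank_u" "real rank_u < (real iu - 1 + g) * N"
  using near_u unfolding near_expected_rank_def by simp_all

private lemma rank_v_window:
  "(real iv - g) * N - 1 < real rank_v" "real rank_v < (real iv - 1 + g) * N"
  using near_v unfolding near_expected_rank_def by simp_all

private lemma pivots_eq:
  "pivot_u xs k s g I = sort xs ! rank_u" "pivot_v xs k s g I = sort xs ! rank_v"
  using ystar_eq_nth_sort[OF I(1)] pivot_indices I(2) by (simp_all add: pivot_u_def pivot_v_def)

lemma residual_size_lt: "real (residual_size xs k s g I) < 4 * g * real n / real s"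
proof -
  note W = idx_window[OF k s g]
  define CL where "CL = card {j \<in> {..<n}. xs ! j < sort xs ! rank_u}"
  define CR where "CR = card {j \<in> {..<n}. sort xs ! rank_v < xs ! j}"
  define CM where "CM = card {j \<in> {..<n}. sort xs ! rank_u < xs ! j \<and> xs ! j < sort xs ! rank_v}"
  have CL: "CL \<le> rank_u" and CR: "CR \<le> n - Suc rank_v" and CM: "CM \<le> rank_v - Suc rank_u"
    using card_less_nth_sort card_greater_nth_sort card_between_nth_sort rank_less_length
    unfolding CL_def CR_def CM_def by simp_all
  have "residual_size xs k s g I = 0 \<or> (k \<le> CL \<and> residual_size xs k s g I = CL)
      \<or> (n - CR < k \<and> residual_size xs k s g I = CR) \<or> residual_size xs k s g I = CM"
    unfolding residual_size_def Let_def pivots_eq CL_def CR_def CM_def by auto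
  moreover have "real CL < g * N" if "k \<le> CL"
    using W(1) rank_u_window(2) CL that by (cases "iu = 1") simp_all
  moreover have "real CR < g * N" if "n - CR < k"
  proof (cases "iv = s")
    case True
    then have "(real iv - g) * N = real n - g * N" using sizes(4) by (simp add: field_simps)
    then have "real n - g * N - 1 < real rank_v" using rank_v_window(1) by linarith
    then show ?thesis using CR rank_less_length(2) by (simp add: of_nat_diff)
  next
    case False
    then have "k \<le> rank_v" using W(2) rank_v_window(1) by simp
    then show ?thesis using that CR rank_less_length(2) by linarith
  qed
  moreover have "real CM < 4 * g * N"
  proof (cases "rank_u < rank_v")
    case True
    then show ?thesis using W(3) rank_u_window(1) rank_v_window(2) CM by (simp add: of_nat_diff)
  qed (use CM sizes(5) in simp)
  ultimately show ?thesis using sizes(5) by auto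
qed

lemma comparisons_le:
  "real (comparisons xs k s g I) \<le> real n + real (min k (n - k)) - real s + 2 * g * real n / real s"
proof -
  note W = idx_window[OF k s g]
  consider (equal) "pivot_u xs k s g I = pivot_v xs k s g I"
    | (low) "pivot_u xs k s g I \<noteq> pivot_v xs k s g I" "real k < real n / 2"
    | (high) "pivot_u xs k s g I \<noteq> pivot_v xs k s g I" "\<not> real k < real n / 2"
    by blast
  then have "real (comparisons xs k s g I) \<le> real n + real (min k (n - k)) - real s + 2 * g * N"
  proof cases
    case equal
    then show ?thesis using sizes g unfolding comparisons_def by (simp add: of_nat_diff)
  next
    case low
    define C where "C = card {j \<in> {..<n}. j \<notin> I \<and> xs ! j < sort xs ! rank_v}"
    have "C + (iv - 1) \<le> rank_v"
      using card_unsampled_below_sample_rank[OF I(1)] pivot_indices I(2) unfolding C_def by simp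
    then have "real C \<le> real k + 2 * g * N"
      using W(4) rank_v_window(2) pivot_indices(3) by (simp add: of_nat_diff)
    moreover have "comparisons xs k s g I = (n - s) + C"
      using low unfolding comparisons_def Let_def C_def pivots_eq by simp
    ultimately show ?thesis using low sizes(3) by (simp add: of_nat_diff)
  next
    case high
    define C where "C = card {j \<in> {..<n}. j \<notin> I \<and> sort xs ! rank_u < xs ! j}"
    have "C + (s - iu) \<le> n - Suc rank_u"
      using card_unsampled_above_sample_rank[OF I(1)] pivot_indices I(2) unfolding C_def by simp
    then have "real C \<le> real n - real k + 2 * g * N"
      using W(5) rank_u_window(1) pivot_indices(2) rank_less_length(1) by (simp add: of_nat_diff)
    moreover have "comparisons xs k s g I = (n - s) + C"
      using high unfolding comparisons_def Let_def C_def pivots_eq by simp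
    ultimately show ?thesis using high sizes(3) k by (simp add: of_nat_diff)
  qed
  then show ?thesis by simp
qed

end

theorem corollary3p4:
  fixes xs :: "'a::linorder list" and k s :: nat and g :: real
  assumes "length xs \<ge> 2" and "1 \<le> k" and "k \<le> length xs"
    and "1 \<le> s" and "s \<le> length xs - 1" and "g > 0"
  shows "measure_pmf.prob (sample_dist (length xs) s)
           {I. real (comparisons xs k s g I)
                 \<le> real (length xs) + real (min k (length xs - k)) - real s
                   + 2 * g * real (length xs) / real s
             \<and> real (residual_size xs k s g I) < 4 * g * real (length xs) / real s}
         \<ge> 1 - 4 * exp (- 2 * g\<^sup>2 / real s)"
proof -
  define iu where "iu = idx_u (length xs) k s g"
  define iv where "iv = idx_v (length xs) k s g"
  define bad where "bad = (\<lambda>i. {I. \<not> near_expected_rank (length xs) s g i (sample_rank xs I i)})"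
  let ?P = "measure_pmf.prob (sample_dist (length xs) s)"
  have s: "1 \<le> s" "s \<le> length xs" and g: "0 < g" using assms by simp_all
  have "?P (bad iu) \<le> 2 * exp (- 2 * g\<^sup>2 / real s)" "?P (bad iv) \<le> 2 * exp (- 2 * g\<^sup>2 / real s)"
    using prob_not_near_expected_rank[OF s less_imp_le[OF g]]
      idx_u_bounds[OF assms(3) s(1) less_imp_le[OF g]] idx_v_bounds[OF s(1) g]
    unfolding bad_def iu_def iv_def by simp_all
  then have "1 - 4 * exp (- 2 * g\<^sup>2 / real s) \<le> 1 - ?P (bad iu \<union> bad iv)"
    using measure_Un_le[of "bad iu" "measure_pmf (sample_dist (length xs) s)" "bad iv"] by simp
  also have "\<dots> = ?P (UNIV - (bad iu \<union> bad iv))"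
    using measure_pmf.prob_compl[of "bad iu \<union> bad iv" "sample_dist (length xs) s"] by simp
  also have "UNIV - (bad iu \<union> bad iv)
             = {I. near_expected_rank (length xs) s g iu (sample_rank xs I iu)
                 \<and> near_expected_rank (length xs) s g iv (sample_rank xs I iv)}"
    unfolding bad_def by blast
  also have "?P \<dots> \<le> ?P {I. real (comparisons xs k s g I)
                             \<le> real (length xs) + real (min k (length xs - k)) - real s
                               + 2 * g * real (length xs) / real s
                           \<and> real (residual_size xs k s g I) < 4 * g * real (length xs) / real s}"
    using residual_size_lt[OF assms(3) s g] comparisons_le[OF assms(3) s g]
    unfolding iu_def iv_def by (intro prob_sample_dist_mono) (simp_all add: s)
  finally show ?thesis .
qed

end
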